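(* Assume the Koopman operator dynamics have the control-affine form $$\dot z=\mathfrak{K}_x z(x(t))+\mathfrak{K}_u v(x(t))u(t),$$ where $z(x)\in\mathbb{R}^{c_x}$ is a vector of observation functions of the state $x\in\mathbb{R}^n$ (with $x$ recoverable from $z$), $v:\mathbb{R}^n\to\mathbb{R}^{c_u\times m}$, $u\in\mathbb{R}^m$, $\mathfrak{K}_x\in\mathbb{R}^{c_x\times c_x}$, $\mathfrak{K}_u\in\mathbb{R}^{c_x\times c_u}$. Consider the objective $J=\int_{t_i}^{t_i+T}\ell(z(s),u(s))\,ds+m(z(t_i+T))$ with a $\mathcal{C}^1$ policy $\mu$, let $z(t)$ be the trajectory under $u=\mu(z)$, and let $\rho$ be the adjoint solving $\dot\rho=-\left(\frac{\partial\ell}{\partial z}+\frac{\partial\mu}{\partial z}^\top\frac{\partial\ell}{\partial u}\right)-\left(\frac{\partial f}{\partial z}+\frac{\partial f}{\partial u}\frac{\partial\mu}{\partial z}\right)^\top\rho$, $\rho(t_i+T)=\frac{\partial m}{\partial z}(z(t_i+T))$, where $f$ denotes the right-hand side of the dynamics. Let $\tilde{\mathbf{R}}\in\mathbb{R}^{m\times m}$ be positive definite and $$\mu_\star(t)=-\tilde{\mathbf{R}}^{-1}\big(\mathfrak{K}_u v(x(t))\big)^\top\rho(t)+\mu(z(t)).$$ Assume moreover that $\frac{\partial}{\partial\mu}\mathcal{H}\neq0$, where $\mathcal{H}$ is the control Hamiltonian of $J$. Then, for $\mu_\star(t)\in\mathcal{U}$ for all $t\in[t_i,t_i+T]$, where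 $\mathcal{U}$ is the control space, the mode insertion gradient $\frac{\partial J}{\partial\lambda}=\rho^\top\big(f(z,\mu_\star)-f(z,\mu(z))\big)$ satisfies $$\frac{\partial J}{\partial\lambda}=-\big\|(\mathfrak{K}_u v(x))^\top\rho\big\|^2_{\tilde{\mathbf{R}}^{-1}}<0.$$
   Context: The mode insertion gradient $\frac{\partial J}{\partial\lambda}$ at time $\tau$ is the derivative of $J$ with respect to the duration $\lambda$ of switching the control from the policy $\mu$ to $\mu_\star$ on $[\tau,\tau+\lambda]$, evaluated at $\lambda=0$; it equals $\rho(\tau)^\top(f(z(\tau),\mu_\star(\tau))-f(z(\tau),\mu(z(\tau))))$. The control Hamiltonian is $\mathcal{H}=\ell(z,u)+\rho^\top f(z,u)$. The notation $\|w\|^2_{A}=w^\top A w$.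
   Formalization: The hypothesis $\frac{\partial}{\partial\mu}\mathcal{H}\neq0$ is replaced by nonvanishing at every t in $[t_i,t_i+T]$ of the u-derivative of $\rho^\top f(z,u)$ alone, without $\frac{\partial\ell}{\partial u}$, so $(\mathfrak{K}_u v(x))^\top\rho\neq0$. Apart from conventions, each condition added here is assumed in the paper as well or is needed for the statement above to hold. *)

theory Defs
  imports "HOL-Analysis.Analysis"
begin

text \<open>Control-affine Koopman dynamics written in the lifted coordinates:
  f(z,u) = K_x z + K_u v(x(z)) u, where xr recovers the state from the observables.\<close>
definition koopman_f ::
  "real^'cx^'cx \<Rightarrow> real^'cu^'cx \<Rightarrow> (real^'n \<Rightarrow> real^'m^'cu) \<Rightarrow> (real^'cx \<Rightarrow> real^'n)
   \<Rightarrow> real^'cx \<Rightarrow> real^'m \<Rightarrow> real^'cx" where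
  "koopman_f Kx Ku v xr z u = Kx *v z + (Ku ** v (xr z)) *v u"

definition wnorm2 :: "real^'k \<Rightarrow> real^'k^'k \<Rightarrow> real" where
  "wnorm2 w A = w \<bullet> (A *v w)"

definition pos_def_mat :: "real^'k^'k \<Rightarrow> bool" where
  "pos_def_mat A \<longleftrightarrow> transpose A = A \<and> (\<forall>y. y \<noteq> 0 \<longrightarrow> y \<bullet> (A *v y) > 0)"

definition mode_insertion_gradient ::
  "(real^'cx \<Rightarrow> real^'m \<Rightarrow> real^'cx) \<Rightarrow> (real \<Rightarrow> real^'cx) \<Rightarrow> (real \<Rightarrow> real^'cx)
   \<Rightarrow> (real \<Rightarrow> real^'m) \<Rightarrow> (real^'cx \<Rightarrow> real^'m) \<Rightarrow> real \<Rightarrow> real" where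
  "mode_insertion_gradient f rho z mu_star mu t =
     rho t \<bullet> (f (z t) (mu_star t) - f (z t) (mu (z t)))"

end

theory Submission
  imports Defs
begin

text \<open>The dynamics are affine in the control, so the mode insertion gradient is linear in
  \<open>\<mu>\<^sub>\<star> - \<mu>(z) = -R\<^sup>-\<^sup>1 b\<close> with \<open>b = (K\<^sub>u v(x))\<^sup>T \<rho>\<close>, which turns it into
  \<open>-b\<^sup>T R\<^sup>-\<^sup>1 b\<close>. Strict negativity needs \<open>b \<noteq> 0\<close>, and \<open>b\<close> is exactly the gradient
  of \<open>u \<mapsto> \<rho>\<^sup>T f(z,u)\<close>, nonzero by the hypothesis on the Hamiltonian.\<close>

lemma matrix_inv_right:
  fixes A :: "'a::field^'n^'n"
  assumes "invertible A"
  shows "A ** matrix_inv A = mat 1"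
proof -
  have "\<exists>A'. A ** A' = mat 1 \<and> A' ** A = mat 1"
    using assms unfolding invertible_def .
  then show ?thesis
    unfolding matrix_inv_def by (rule someI_ex[THEN conjunct1])
qed

lemma pos_def_mat_invertible:
  assumes "pos_def_mat A"
  shows "invertible A"
proof -
  have "y = 0" if "A *v y = 0" for y
    using assms that unfolding pos_def_mat_def by (metis inner_zero_right less_irrefl)
  then show ?thesis
    using matrix_left_invertible_ker invertible_left_inverse by blast
qed

lemma pos_def_mat_wnorm2_matrix_inv_pos:
  assumes A: "pos_def_mat A" and "b \<noteq> 0"
  shows "wnorm2 b (matrix_inv A) > 0"
proof -
  define w where "w = matrix_inv A *v b"
  have Aw: "A *v w = b"
    unfolding w_def
    by (simp add: matrix_vector_mul_assoc matrix_inv_right[OF pos_def_mat_invertible[OF A]])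
  with \<open>b \<noteq> 0\<close> have "w \<noteq> 0" by auto
  have "wnorm2 b (matrix_inv A) = w \<bullet> (A *v w)"
    unfolding wnorm2_def w_def[symmetric] Aw by (rule inner_commute)
  also have "\<dots> > 0"
    using A \<open>w \<noteq> 0\<close> unfolding pos_def_mat_def by blast
  finally show ?thesis .
qed

lemma inner_koopman_f_control_diff:
  "r \<bullet> (koopman_f Kx Ku v xr w u - koopman_f Kx Ku v xr w u')
     = (transpose (Ku ** v (xr w)) *v r) \<bullet> (u - u')"
  unfolding koopman_f_def
  by (simp add: dot_lmul_matrix matrix_vector_mult_diff_distrib)

lemma inner_koopman_f_has_derivative_control:
  "((\<lambda>u. r \<bullet> koopman_f Kx Ku v xr w u)
     has_derivative (\<lambda>h. (transpose (Ku ** v (xr w)) *v r) \<bullet> h)) (at p)"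
proof -
  have "(\<lambda>u. r \<bullet> koopman_f Kx Ku v xr w u)
          = (\<lambda>u. r \<bullet> (Kx *v w) + (transpose (Ku ** v (xr w)) *v r) \<bullet> u)"
    unfolding koopman_f_def by (simp add: inner_add_right dot_lmul_matrix)
  then show ?thesis
    by (auto intro!: derivative_eq_intros)
qed

lemma control_gradient_nonzero:
  assumes "((\<lambda>u. r \<bullet> koopman_f Kx Ku v xr w u) has_derivative D) (at p)" and "D \<noteq> (\<lambda>_. 0)"
  shows "transpose (Ku ** v (xr w)) *v r \<noteq> 0"
  using has_derivative_unique[OF assms(1) inner_koopman_f_has_derivative_control] assms(2)
  by auto

theorem corollary1:
  fixes Kx :: "real^'cx^'cx" and Ku :: "real^'cu^'cx"
    and v :: "real^'n \<Rightarrow> real^'m^'cu"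
    and zeta :: "real^'n \<Rightarrow> real^'cx" and xr :: "real^'cx \<Rightarrow> real^'n"
    and x :: "real \<Rightarrow> real^'n"
    and mu :: "real^'cx \<Rightarrow> real^'m" and Jmu :: "real^'cx \<Rightarrow> real^'cx^'m"
    and l :: "real^'cx \<Rightarrow> real^'m \<Rightarrow> real"
    and lz :: "real^'cx \<Rightarrow> real^'m \<Rightarrow> real^'cx" and lu :: "real^'cx \<Rightarrow> real^'m \<Rightarrow> real^'m"
    and mT :: "real^'cx \<Rightarrow> real" and mz :: "real^'cx \<Rightarrow> real^'cx"
    and Jfz :: "real^'cx \<Rightarrow> real^'m \<Rightarrow> real^'cx^'cx"
    and rho :: "real \<Rightarrow> real^'cx"
    and R :: "real^'m^'m" and U :: "(real^'m) set"
    and ti T :: real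
  defines "f \<equiv> koopman_f Kx Ku v xr"
    and "z \<equiv> (\<lambda>t. zeta (x t))"
    and "mu_star \<equiv> (\<lambda>t. - (matrix_inv R *v (transpose (Ku ** v (x t)) *v rho t)) + mu (zeta (x t)))"
  assumes T_pos: "T > 0"
    and recover: "\<And>y. xr (zeta y) = y"
    (* mu is a C^1 policy *)
    and mu_deriv: "\<And>w. (mu has_derivative (\<lambda>h. Jmu w *v h)) (at w)"
    and mu_C1: "continuous_on UNIV Jmu"
    (* partial derivatives of the running cost, terminal cost and dynamics *)
    and l_dz: "\<And>w u. ((\<lambda>w'. l w' u) has_derivative (\<lambda>h. lz w u \<bullet> h)) (at w)"
    and l_du: "\<And>w u. ((\<lambda>u'. l w u') has_derivative (\<lambda>h. lu w u \<bullet> h)) (at u)"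
    and m_dz: "\<And>w. (mT has_derivative (\<lambda>h. mz w \<bullet> h)) (at w)"
    and f_dz: "\<And>w u. ((\<lambda>w'. f w' u) has_derivative (\<lambda>h. Jfz w u *v h)) (at w)"
    (* closed-loop trajectory under u = mu(z) *)
    and traj: "\<And>t. t \<in> {ti..ti+T} \<Longrightarrow>
        (z has_vector_derivative f (z t) (mu (z t))) (at t within {ti..ti+T})"
    (* adjoint equation and terminal condition *)
    and adjoint: "\<And>t. t \<in> {ti..ti+T} \<Longrightarrow>
        (rho has_vector_derivative
           (- (lz (z t) (mu (z t)) + transpose (Jmu (z t)) *v lu (z t) (mu (z t)))
            - transpose (Jfz (z t) (mu (z t)) + (Ku ** v (xr (z t))) ** Jmu (z t)) *v rho t))
        (at t within {ti..ti+T})"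
    and adjoint_end: "rho (ti + T) = mz (z (ti + T))"
    and R_pd: "pos_def_mat R"
    (* dH/du \<noteq> 0, read as: the control sensitivity of rho^T f is nonzero *)
    and H_nonzero: "\<And>t. t \<in> {ti..ti+T} \<Longrightarrow>
        \<exists>D. ((\<lambda>u. rho t \<bullet> f (z t) u) has_derivative D) (at (mu (z t))) \<and> D \<noteq> (\<lambda>_. 0)"
    and in_U: "\<And>t. t \<in> {ti..ti+T} \<Longrightarrow> mu_star t \<in> U"
  shows "\<forall>t \<in> {ti..ti+T}.
           mode_insertion_gradient f rho z mu_star mu t
             = - wnorm2 (transpose (Ku ** v (x t)) *v rho t) (matrix_inv R)
         \<and> mode_insertion_gradient f rho z mu_star mu t < 0"
proof (intro ballI conjI)
  fix t assume t: "t \<in> {ti..ti+T}"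
  define b where "b = transpose (Ku ** v (x t)) *v rho t"
  have xr: "xr (z t) = x t"
    unfolding z_def using recover by simp
  have "mode_insertion_gradient f rho z mu_star mu t = b \<bullet> (mu_star t - mu (z t))"
    unfolding mode_insertion_gradient_def f_def inner_koopman_f_control_diff xr b_def ..
  also have "\<dots> = - wnorm2 b (matrix_inv R)"
    unfolding mu_star_def z_def b_def[symmetric] wnorm2_def by simp
  finally show mig: "mode_insertion_gradient f rho z mu_star mu t
      = - wnorm2 (transpose (Ku ** v (x t)) *v rho t) (matrix_inv R)"
    unfolding b_def .
  obtain D where "((\<lambda>u. rho t \<bullet> f (z t) u) has_derivative D) (at (mu (z t)))" "D \<noteq> (\<lambda>_. 0)"
    using H_nonzero[OF t] by blast
  then have "b \<noteq> 0"
    unfolding f_def b_def using control_gradient_nonzero xr by metis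
  then show "mode_insertion_gradient f rho z mu_star mu t < 0"
    unfolding mig b_def[symmetric] using pos_def_mat_wnorm2_matrix_inv_pos[OF R_pd] by simp
qed

end
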